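(* Let $f_r(w,u)(x)=\sum_{l=1}^{n_1}w_{r,l}\big(\sum_{m=1}^d u_{lm}x_m\big)^{\alpha_l}$ with $\alpha\in\mathbb{R}^{n_1}$, $\alpha_l\ge1$, and let $\rho_x=\max_{i\in[n]}\|x^i\|_{p_u'}$. Then for every $x\in\{x^1,\dots,x^n\}$, every $(w,u)\in B_{++}$, all $r,s,q\in[K]$, $t,b'\in[n_1]$, $a'\in[n_1]$, $b''\in[d]$: $$\sum_{t}w_{s,t}\frac{\partial f_r(x)}{\partial w_{s,t}}\le C_w:=\rho_w\Psi^\alpha_{p_w',p_u}(\mathbf{1},\rho_u\rho_x),\qquad \sum_{a,b}u_{ab}\frac{\partial f_r(x)}{\partial u_{ab}}\le C_u:=\rho_w\Psi^\alpha_{p_w',p_u}(\alpha,\rho_u\rho_x),$$ $$\sum_t w_{s,t}\frac{\partial^2 f_r(x)}{\partial w_{s,t}\partial w_{q,b'}}=0,\qquad \sum_{a,b}u_{ab}\frac{\partial^2 f_r(x)}{\partial u_{ab}\partial w_{q,b'}}\le\|\alpha\|_\infty\frac{\partial f_r(x)}{\partial w_{q,b'}},$$ $$\sum_t w_{s,t}\frac{\partial^2 f_r(x)}{\partial w_{s,t}\partial u_{a'b''}}\le\frac{\partial f_r(x)}{\partial u_{a'b''}},\qquad \sum_{a,b}u_{ab}\frac{\partial^2 f_r(x)}{\partial u_{ab}\partial u_{a'b''}}\le(\|\alpha\|_\infty-1)\frac{\partial f_r(x)}{\partial u_{a'b''}}.$$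
   Context: Data $x^i\in\mathbb{R}^d_+$, $i\in[n]$. $w\in\mathbb{R}^{K\times n_1}$ with rows $w_1,\dots,w_K$, $u\in\mathbb{R}^{n_1\times d}$. Given $p_w,p_u\in(1,\infty)$, $\rho_w,\rho_u>0$, $B_{++}=\{(w,u)\in\mathbb{R}^{K\times n_1}_{++}\times\mathbb{R}^{n_1\times d}_{++}:\|u\|_{p_u}\le\rho_u,\ \|w_i\|_{p_w}\le\rho_w\ \forall i\}$ (entrywise norms); $p'=p/(p-1)$. $\mathbf{1}$ is the all-ones vector in $\mathbb{R}^{n_1}$. For $p,q\ge1$ and $\alpha\in\mathbb{R}^{n_1}_{++}$, $$\Psi^{\alpha}_{p,q}(\delta,t)=\Big(\Big[\sum_{l\in J}(\delta_l t^{\alpha_l})^{\frac{pq}{q-\bar\alpha p}}\Big]^{1-\frac{\bar\alpha p}{q}}+\max_{j\in J^c}(\delta_j t^{\alpha_j})^p\Big)^{1/p},\quad \delta\in\mathbb{R}^{n_1}_{++},\ t>0,$$ with $J=\{l:\alpha_lp<q\}$, $J^c=\{l:\alpha_lp\ge q\}$, $\bar\alpha=\min_{l\in J}\alpha_l$, empty sums/maxima equal to $0$. *)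

theory Defs
  imports "HOL-Analysis.Analysis"
begin

text \<open>Matrices are represented as functions nat => nat => real; only the
entries with indices in the relevant ranges matter.\<close>

definition conj_exp :: "real \<Rightarrow> real" where
  "conj_exp p = p / (p - 1)"

definition lpnorm :: "nat \<Rightarrow> real \<Rightarrow> (nat \<Rightarrow> real) \<Rightarrow> real" where
  "lpnorm d p v = (\<Sum>m<d. \<bar>v m\<bar> powr p) powr (1 / p)"

definition lpnorm_mat :: "nat \<Rightarrow> nat \<Rightarrow> real \<Rightarrow> (nat \<Rightarrow> nat \<Rightarrow> real) \<Rightarrow> real" where
  "lpnorm_mat k d p u = (\<Sum>l<k. \<Sum>m<d. \<bar>u l m\<bar> powr p) powr (1 / p)"

definition Bpp :: "nat \<Rightarrow> nat \<Rightarrow> nat \<Rightarrow> real \<Rightarrow> real \<Rightarrow> real \<Rightarrow> real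
   \<Rightarrow> ((nat \<Rightarrow> nat \<Rightarrow> real) \<times> (nat \<Rightarrow> nat \<Rightarrow> real)) set" where
  "Bpp K n1 d pw pu rhow rhou =
     {(w, u). (\<forall>i<K. \<forall>l<n1. w i l > 0) \<and> (\<forall>l<n1. \<forall>m<d. u l m > 0) \<and>
              lpnorm_mat n1 d pu u \<le> rhou \<and> (\<forall>i<K. lpnorm n1 pw (w i) \<le> rhow)}"

definition Psi :: "nat \<Rightarrow> (nat \<Rightarrow> real) \<Rightarrow> real \<Rightarrow> real \<Rightarrow> (nat \<Rightarrow> real) \<Rightarrow> real \<Rightarrow> real" where
  "Psi n1 alpha p q delta t =
     (let J = {l\<in>{..<n1}. alpha l * p < q};
          Jc = {l\<in>{..<n1}. alpha l * p \<ge> q};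
          ab = Min (alpha ` J)
      in ((if J = {} then 0 else
             (\<Sum>l\<in>J. (delta l * t powr alpha l) powr (p * q / (q - ab * p))) powr (1 - ab * p / q))
          + (if Jc = {} then 0 else Max ((\<lambda>j. (delta j * t powr alpha j) powr p) ` Jc)))
         powr (1 / p))"

definition fnet :: "nat \<Rightarrow> nat \<Rightarrow> (nat \<Rightarrow> real) \<Rightarrow> (nat \<Rightarrow> real) \<Rightarrow> nat
   \<Rightarrow> (nat \<Rightarrow> nat \<Rightarrow> real) \<Rightarrow> (nat \<Rightarrow> nat \<Rightarrow> real) \<Rightarrow> real" where
  "fnet n1 d alpha x r w u = (\<Sum>l<n1. w r l * (\<Sum>m<d. u l m * x m) powr alpha l)"

definition pdw :: "((nat \<Rightarrow> nat \<Rightarrow> real) \<Rightarrow> (nat \<Rightarrow> nat \<Rightarrow> real) \<Rightarrow> real)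
   \<Rightarrow> nat \<Rightarrow> nat \<Rightarrow> (nat \<Rightarrow> nat \<Rightarrow> real) \<Rightarrow> (nat \<Rightarrow> nat \<Rightarrow> real) \<Rightarrow> real" where
  "pdw F s t w u = deriv (\<lambda>h. F (w(s := (w s)(t := w s t + h))) u) 0"

definition pdu :: "((nat \<Rightarrow> nat \<Rightarrow> real) \<Rightarrow> (nat \<Rightarrow> nat \<Rightarrow> real) \<Rightarrow> real)
   \<Rightarrow> nat \<Rightarrow> nat \<Rightarrow> (nat \<Rightarrow> nat \<Rightarrow> real) \<Rightarrow> (nat \<Rightarrow> nat \<Rightarrow> real) \<Rightarrow> real" where
  "pdu F a b w u = deriv (\<lambda>h. F w (u(a := (u a)(b := u a b + h)))) 0"

end

theory Submission
  imports Defs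
begin

text \<open>
  Write \<open>z\<^sub>l = \<Sum>\<^sub>m u\<^sub>l\<^sub>m x\<^sub>m\<close> for the pre-activations, so that
  \<open>f\<^sub>r = \<Sum>\<^sub>l w\<^sub>r\<^sub>l z\<^sub>l\<^bsup>\<alpha>\<^sub>l\<^esup>\<close> is linear in \<open>w\<close>
  and \<open>z\<^sub>l\<^bsup>\<alpha>\<^sub>l\<^esup>\<close> is homogeneous of degree \<open>\<alpha>\<^sub>l\<close> in the \<open>l\<close>-th row of \<open>u\<close>.
  Euler's identity turns every weighted sum of partial derivatives in the statement into an
  explicit expression; for instance \<open>\<Sum> u\<^sub>a\<^sub>b \<partial>f\<^sub>r/\<partial>u\<^sub>a\<^sub>b = \<Sum>\<^sub>l \<alpha>\<^sub>l w\<^sub>r\<^sub>l z\<^sub>l\<^bsup>\<alpha>\<^sub>l\<^esup>\<close>.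
  The second-order claims then follow from \<open>\<alpha>\<^sub>l \<le> \<parallel>\<alpha>\<parallel>\<^sub>\<infinity>\<close> and the nonnegativity of
  the first derivatives, as soon as all \<open>z\<^sub>l\<close> are positive (otherwise \<open>x = 0\<close> and \<open>f\<^sub>r = 0\<close>).

  For the first-order bounds, Holder's inequality gives
  \<open>\<Sum>\<^sub>l w\<^sub>r\<^sub>l \<delta>\<^sub>l z\<^sub>l\<^bsup>\<alpha>\<^sub>l\<^esup> \<le> \<rho>\<^sub>w \<parallel>(\<delta>\<^sub>l z\<^sub>l\<^bsup>\<alpha>\<^sub>l\<^esup>)\<^sub>l\<parallel>\<^sub>p\<close> with \<open>p = p\<^sub>w'\<close>, and
  by Holder once more \<open>z\<^sub>l \<le> \<parallel>u\<^sub>l\<parallel>\<^sub>p\<^sub>u \<rho>\<^sub>x = \<rho>\<^sub>u \<rho>\<^sub>x y\<^sub>l\<close> with \<open>\<parallel>y\<parallel>\<^sub>p\<^sub>u \<le> 1\<close>.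
  Split the indices according to whether \<open>\<alpha>\<^sub>l p < p\<^sub>u\<close>: on the first group a third
  Holder inequality, with exponent \<open>\<theta> = \<alpha>\<^sub>m\<^sub>i\<^sub>n p / p\<^sub>u\<close> on the weights \<open>y\<^sub>l\<^bsup>p\<^sub>u\<^esup>\<close>,
  produces the sum in \<open>\<Psi>\<close>; on the second group \<open>y\<^sub>l\<^bsup>\<alpha>\<^sub>l p\<^esup> \<le> y\<^sub>l\<^bsup>p\<^sub>u\<^esup>\<close>,
  so that part is at most its largest coefficient.
\<close>

section \<open>Holder's inequality and \<open>l\<^sub>p\<close> norms\<close>

lemma Holder_inequality_sum:
  fixes a b :: "'i \<Rightarrow> real"
  assumes "finite I" and p: "p > 1" and q: "q > 1" and pq: "1/p + 1/q = 1"
    and a: "\<And>i. i \<in> I \<Longrightarrow> a i \<ge> 0" and b: "\<And>i. i \<in> I \<Longrightarrow> b i \<ge> 0"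
  shows "(\<Sum>i\<in>I. a i * b i) \<le> (\<Sum>i\<in>I. a i powr p) powr (1/p) * (\<Sum>i\<in>I. b i powr q) powr (1/q)"
proof -
  define A where "A = (\<Sum>i\<in>I. a i powr p)"
  define B where "B = (\<Sum>i\<in>I. b i powr q)"
  show ?thesis
  proof (cases "A = 0 \<or> B = 0")
    case True
    then have "\<forall>i\<in>I. a i * b i = 0"
      using sum_nonneg_eq_0_iff[OF \<open>finite I\<close>, of "\<lambda>i. a i powr p"]
        sum_nonneg_eq_0_iff[OF \<open>finite I\<close>, of "\<lambda>i. b i powr q"]
      by (auto simp: A_def B_def)
    then have "(\<Sum>i\<in>I. a i * b i) = 0"
      by (intro sum.neutral) blast
    then show ?thesis
      by simp
  next
    case False
    have "A \<ge> 0" "B \<ge> 0"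
      unfolding A_def B_def by (simp_all add: sum_nonneg)
    then have "A > 0" "B > 0"
      using False by auto
    define \<alpha> where "\<alpha> = A powr (1/p)"
    define \<beta> where "\<beta> = B powr (1/q)"
    have "\<alpha> > 0" "\<beta> > 0" "\<alpha> powr p = A" "\<beta> powr q = B"
      using \<open>A > 0\<close> \<open>B > 0\<close> p q by (auto simp: \<alpha>_def \<beta>_def powr_powr)
    have Young: "(a i / \<alpha>) * (b i / \<beta>) \<le> a i powr p / (p * A) + b i powr q / (q * B)"
      if "i \<in> I" for i
      using Youngs_inequality[OF p q pq, of "a i / \<alpha>" "b i / \<beta>"] a[OF that] b[OF that]
        \<open>\<alpha> > 0\<close> \<open>\<beta> > 0\<close> \<open>\<alpha> powr p = A\<close> \<open>\<beta> powr q = B\<close>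
      by (simp add: powr_divide mult.commute)
    have "(\<Sum>i\<in>I. a i * b i) / (\<alpha> * \<beta>) = (\<Sum>i\<in>I. (a i / \<alpha>) * (b i / \<beta>))"
      by (simp add: sum_divide_distrib)
    also have "\<dots> \<le> (\<Sum>i\<in>I. a i powr p / (p * A) + b i powr q / (q * B))"
      using Young by (rule sum_mono)
    also have "\<dots> = 1"
      using \<open>A > 0\<close> \<open>B > 0\<close> pq
      by (simp add: sum.distrib A_def B_def sum_divide_distrib[symmetric])
    finally show ?thesis
      using \<open>\<alpha> > 0\<close> \<open>\<beta> > 0\<close> by (simp add: \<alpha>_def \<beta>_def A_def B_def)
  qed
qed

lemma lpnorm_nonneg: "lpnorm n p v \<ge> 0"
  by (simp add: lpnorm_def)

lemma sum_mult_le_lpnorm: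
  assumes "p > 1" "q > 1" "1/p + 1/q = 1"
  shows "(\<Sum>i<n. a i * b i) \<le> lpnorm n p a * lpnorm n q b"
proof -
  have "(\<Sum>i<n. a i * b i) \<le> (\<Sum>i<n. \<bar>a i\<bar> * \<bar>b i\<bar>)"
    by (intro sum_mono) (metis abs_ge_self abs_mult)
  also have "\<dots> \<le> lpnorm n p a * lpnorm n q b"
    unfolding lpnorm_def by (rule Holder_inequality_sum) (use assms in auto)
  finally show ?thesis .
qed

lemma lpnorm_divide:
  assumes "c > 0" "p > 0"
  shows "lpnorm n p (\<lambda>i. v i / c) = lpnorm n p v / c"
proof -
  have "(\<Sum>i<n. \<bar>v i / c\<bar> powr p) = (\<Sum>i<n. \<bar>v i\<bar> powr p) / c powr p"
    using assms by (simp add: powr_divide sum_divide_distrib)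
  then show ?thesis
    using assms by (simp add: lpnorm_def powr_divide sum_nonneg powr_powr)
qed

lemma lpnorm_of_row_norms:
  assumes "q > 0"
  shows "lpnorm n1 q (\<lambda>l. lpnorm d q (u l)) = lpnorm_mat n1 d q u"
  using assms by (simp add: lpnorm_def lpnorm_mat_def powr_powr sum_nonneg)

lemma lpnorm_le_1_iff:
  assumes "q > 0"
  shows "lpnorm n q y \<le> 1 \<longleftrightarrow> (\<Sum>i<n. \<bar>y i\<bar> powr q) \<le> 1"
proof -
  define S where "S = (\<Sum>i<n. \<bar>y i\<bar> powr q)"
  have "S \<ge> 0" "S = (S powr (1/q)) powr q"
    using assms by (simp_all add: S_def sum_nonneg powr_powr)
  then show ?thesis
    using assms powr_le1[of q "S powr (1/q)"] powr_le1[of "1/q" S]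
    unfolding lpnorm_def S_def[symmetric] by auto
qed

lemma conj_exp_gt_1: "p > 1 \<Longrightarrow> conj_exp p > 1"
  by (simp add: conj_exp_def)

lemma inverse_add_conj_exp: "p > 1 \<Longrightarrow> 1/p + 1/conj_exp p = 1"
  by (simp add: conj_exp_def field_simps)

lemma le_Max_abs_image: "l < (n::nat) \<Longrightarrow> (f l :: real) \<le> Max ((\<lambda>l. \<bar>f l\<bar>) ` {..<n})"
  by (rule order_trans[OF abs_ge_self Max_ge]) simp_all

section \<open>The bound \<open>\<Psi>\<close>\<close>

lemma sum_mult_le_Max:
  fixes e Y :: "'i \<Rightarrow> real"
  assumes "finite I" "I \<noteq> {}" "\<And>i. i \<in> I \<Longrightarrow> 0 \<le> e i" "\<And>i. i \<in> I \<Longrightarrow> 0 \<le> Y i"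
    and "sum Y I \<le> 1"
  shows "(\<Sum>i\<in>I. e i * Y i) \<le> Max (e ` I)"
proof -
  define M where "M = Max (e ` I)"
  have e_le_M: "e i \<le> M" if "i \<in> I" for i
    using assms(1) that by (simp add: M_def)
  then have "M \<ge> 0"
    using assms(2,3) by (meson ex_in_conv order_trans)
  have "(\<Sum>i\<in>I. e i * Y i) \<le> (\<Sum>i\<in>I. M * Y i)"
    using e_le_M assms(4) by (intro sum_mono mult_right_mono) auto
  also have "\<dots> = M * sum Y I"
    by (simp add: sum_distrib_left)
  also have "\<dots> \<le> M"
    using \<open>M \<ge> 0\<close> assms(5) by (simp add: mult_left_le)
  finally show ?thesis
    by (simp add: M_def)
qed

lemma sum_mult_powr_le:
  fixes e Y :: "'i \<Rightarrow> real"
  assumes "finite I" "0 < \<theta>" "\<theta> < 1"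
    and "\<And>i. i \<in> I \<Longrightarrow> 0 \<le> e i" "\<And>i. i \<in> I \<Longrightarrow> 0 \<le> Y i" "sum Y I \<le> 1"
  shows "(\<Sum>i\<in>I. e i * Y i powr \<theta>) \<le> (\<Sum>i\<in>I. e i powr (1/(1-\<theta>))) powr (1-\<theta>)"
proof -
  define E where "E = (\<Sum>i\<in>I. e i powr (1/(1-\<theta>))) powr (1-\<theta>)"
  have "(\<Sum>i\<in>I. e i * Y i powr \<theta>)
      \<le> (\<Sum>i\<in>I. e i powr (1/(1-\<theta>))) powr (1/(1/(1-\<theta>)))
          * (\<Sum>i\<in>I. (Y i powr \<theta>) powr (1/\<theta>)) powr (1/(1/\<theta>))"
    by (rule Holder_inequality_sum) (use assms in \<open>auto simp: field_simps\<close>)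
  also have "(\<Sum>i\<in>I. (Y i powr \<theta>) powr (1/\<theta>)) = sum Y I"
    using assms(2,5) by (intro sum.cong) (auto simp: powr_powr)
  also have "(\<Sum>i\<in>I. e i powr (1/(1-\<theta>))) powr (1/(1/(1-\<theta>))) = E"
    by (simp add: E_def)
  also have "E * sum Y I powr (1/(1/\<theta>)) \<le> E * 1"
    using assms(2,5,6) by (intro mult_left_mono powr_le1) (auto simp: E_def sum_nonneg)
  finally show ?thesis
    by (simp add: E_def)
qed

lemma sum_mult_powr_le_split:
  fixes e Y \<gamma> :: "'i \<Rightarrow> real"
  assumes "finite I" "\<And>i. i \<in> I \<Longrightarrow> 0 \<le> e i" "\<And>i. i \<in> I \<Longrightarrow> 0 \<le> Y i" "sum Y I \<le> 1"
    and "\<And>i. i \<in> I \<Longrightarrow> 0 < \<gamma> i"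
  defines "J \<equiv> {i\<in>I. \<gamma> i < 1}" and "Jc \<equiv> {i\<in>I. \<gamma> i \<ge> 1}"
  defines "g \<equiv> Min (\<gamma> ` J)"
  shows "(\<Sum>i\<in>I. e i * Y i powr \<gamma> i)
    \<le> (if J = {} then 0 else (\<Sum>i\<in>J. e i powr (1/(1-g))) powr (1-g))
      + (if Jc = {} then 0 else Max (e ` Jc))"
proof -
  have "finite J" "finite Jc" "J \<subseteq> I" "Jc \<subseteq> I"
    using assms(1) by (auto simp: J_def Jc_def)
  have Y_le_1: "Y i \<le> 1" if "i \<in> I" for i
    using member_le_sum[of i I Y] assms(1,3,4) that by auto
  have sum_Y_le_1: "sum Y A \<le> 1" if "A \<subseteq> I" for A
    using sum_mono2[OF assms(1) that, of Y] assms(3,4) by auto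
  have J_part: "(\<Sum>i\<in>J. e i * Y i powr \<gamma> i)
      \<le> (if J = {} then 0 else (\<Sum>i\<in>J. e i powr (1/(1-g))) powr (1-g))"
  proof (cases "J = {}")
    case False
    then have "g \<in> \<gamma> ` J"
      using \<open>finite J\<close> by (simp add: g_def)
    then have "0 < g" "g < 1"
      using assms(5) by (auto simp: J_def)
    have "(\<Sum>i\<in>J. e i * Y i powr \<gamma> i) \<le> (\<Sum>i\<in>J. e i * Y i powr g)"
    proof (intro sum_mono mult_left_mono)
      fix i assume "i \<in> J"
      then show "Y i powr \<gamma> i \<le> Y i powr g" "0 \<le> e i"
        using \<open>finite J\<close> assms(2,3) Y_le_1 by (auto simp: g_def J_def intro: powr_mono')
    qed
    also have "\<dots> \<le> (\<Sum>i\<in>J. e i powr (1/(1-g))) powr (1-g)"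
      using \<open>0 < g\<close> \<open>g < 1\<close> \<open>finite J\<close> \<open>J \<subseteq> I\<close> assms(2,3) sum_Y_le_1
      by (intro sum_mult_powr_le) auto
    finally show ?thesis
      using False by simp
  qed (simp)
  have Jc_part: "(\<Sum>i\<in>Jc. e i * Y i powr \<gamma> i) \<le> (if Jc = {} then 0 else Max (e ` Jc))"
  proof (cases "Jc = {}")
    case False
    have "(\<Sum>i\<in>Jc. e i * Y i powr \<gamma> i) \<le> (\<Sum>i\<in>Jc. e i * Y i)"
    proof (intro sum_mono mult_left_mono)
      fix i assume "i \<in> Jc"
      then show "Y i powr \<gamma> i \<le> Y i" "0 \<le> e i"
        using assms(2,3) Y_le_1 powr_mono'[of 1 "\<gamma> i" "Y i"] by (auto simp: Jc_def)
    qed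
    also have "\<dots> \<le> Max (e ` Jc)"
      using False \<open>finite Jc\<close> \<open>Jc \<subseteq> I\<close> assms(2,3) sum_Y_le_1
      by (intro sum_mult_le_Max) auto
    finally show ?thesis
      using False by simp
  qed (simp)
  have "I = J \<union> Jc" "J \<inter> Jc = {}"
    by (auto simp: J_def Jc_def)
  then have "(\<Sum>i\<in>I. e i * Y i powr \<gamma> i)
      = (\<Sum>i\<in>J. e i * Y i powr \<gamma> i) + (\<Sum>i\<in>Jc. e i * Y i powr \<gamma> i)"
    using \<open>finite J\<close> \<open>finite Jc\<close> by (simp add: sum.union_disjoint)
  then show ?thesis
    using J_part Jc_part by linarith
qed

lemma Psi_nonneg: "Psi n1 alpha p q delta t \<ge> 0"
  by (simp add: Psi_def Let_def)

lemma Psi_eq_split_bound: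
  fixes n1 :: nat and e \<gamma> :: "nat \<Rightarrow> real"
  assumes "p > 0" "q > 0"
    and e: "\<And>l. e l = (delta l * t powr alpha l) powr p" and \<gamma>: "\<And>l. \<gamma> l = alpha l * p / q"
  defines "J \<equiv> {l\<in>{..<n1}. \<gamma> l < 1}" and "Jc \<equiv> {l\<in>{..<n1}. \<gamma> l \<ge> 1}"
  defines "g \<equiv> Min (\<gamma> ` J)"
  shows "Psi n1 alpha p q delta t
    = ((if J = {} then 0 else (\<Sum>l\<in>J. e l powr (1/(1-g))) powr (1-g))
       + (if Jc = {} then 0 else Max (e ` Jc))) powr (1/p)"
proof -
  define ab where "ab = Min (alpha ` J)"
  have J_eq: "J = {l\<in>{..<n1}. alpha l * p < q}" and Jc_eq: "Jc = {l\<in>{..<n1}. alpha l * p \<ge> q}"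
    using \<open>q > 0\<close> by (auto simp: J_def Jc_def \<gamma>)
  have "(\<Sum>l\<in>J. e l powr (1/(1-g))) powr (1-g)
      = (\<Sum>l\<in>J. (delta l * t powr alpha l) powr (p * q / (q - ab * p))) powr (1 - ab * p / q)"
    if "J \<noteq> {}"
  proof -
    have g: "g = ab * p / q"
      unfolding g_def ab_def \<gamma> using that assms(1,2)
      by (subst mono_Min_commute[where f = "\<lambda>a. a * p / q"])
         (auto simp: J_def monoI divide_right_mono image_image)
    have "ab \<in> alpha ` J"
      using that by (simp add: ab_def J_def)
    then have "ab * p < q"
      by (auto simp: J_eq)
    then have "p / (1 - ab * p / q) = p * q / (q - ab * p)"
      using \<open>q > 0\<close> by (simp add: field_simps)
    then show ?thesis
      by (simp add: g e powr_powr)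
  qed
  then show ?thesis
    unfolding Psi_def Let_def J_eq[symmetric] Jc_eq[symmetric] ab_def[symmetric] by (simp add: e)
qed

lemma lpnorm_le_Psi:
  fixes alpha delta z y :: "nat \<Rightarrow> real"
  assumes "p > 0" "q > 0" "t \<ge> 0"
    and alpha: "\<And>l. l < n1 \<Longrightarrow> 0 < alpha l" and delta: "\<And>l. l < n1 \<Longrightarrow> 0 \<le> delta l"
    and z: "\<And>l. l < n1 \<Longrightarrow> 0 \<le> z l \<and> z l \<le> t * y l"
    and "lpnorm n1 q y \<le> 1"
  shows "lpnorm n1 p (\<lambda>l. delta l * z l powr alpha l) \<le> Psi n1 alpha p q delta t"
proof -
  define e where "e l = (delta l * t powr alpha l) powr p" for l
  define Y where "Y l = \<bar>y l\<bar> powr q" for l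
  define \<gamma> where "\<gamma> l = alpha l * p / q" for l
  define J where "J = {l\<in>{..<n1}. \<gamma> l < 1}"
  define Jc where "Jc = {l\<in>{..<n1}. \<gamma> l \<ge> 1}"
  have term_le: "\<bar>delta l * z l powr alpha l\<bar> powr p \<le> e l * Y l powr \<gamma> l" if "l < n1" for l
  proof -
    have "z l powr alpha l \<le> (t * \<bar>y l\<bar>) powr alpha l"
      using z[OF that] alpha[OF that] \<open>t \<ge> 0\<close>
      by (intro powr_mono2) (auto intro: order_trans[OF _ mult_left_mono[OF abs_ge_self]])
    then have "\<bar>delta l * z l powr alpha l\<bar> \<le> delta l * t powr alpha l * \<bar>y l\<bar> powr alpha l"
      using delta[OF that] \<open>t \<ge> 0\<close> by (simp add: powr_mult mult_left_mono mult.assoc)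
    then have "\<bar>delta l * z l powr alpha l\<bar> powr p
        \<le> (delta l * t powr alpha l * \<bar>y l\<bar> powr alpha l) powr p"
      using \<open>p > 0\<close> by (intro powr_mono2) auto
    also have "\<dots> = e l * Y l powr \<gamma> l"
      using delta[OF that] \<open>q > 0\<close> by (simp add: e_def Y_def \<gamma>_def powr_mult powr_powr)
    finally show ?thesis .
  qed
  have "sum Y {..<n1} \<le> 1"
    using lpnorm_le_1_iff[OF \<open>q > 0\<close>] \<open>lpnorm n1 q y \<le> 1\<close> by (simp add: Y_def)
  have "(\<Sum>l<n1. \<bar>delta l * z l powr alpha l\<bar> powr p) \<le> (\<Sum>l<n1. e l * Y l powr \<gamma> l)"
    using term_le by (intro sum_mono) simp
  also have "\<dots> \<le> (if J = {} then 0 else (\<Sum>l\<in>J. e l powr (1/(1 - Min (\<gamma> ` J)))) powr (1 - Min (\<gamma> ` J)))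
      + (if Jc = {} then 0 else Max (e ` Jc))"
    unfolding J_def Jc_def using \<open>sum Y {..<n1} \<le> 1\<close> alpha \<open>p > 0\<close> \<open>q > 0\<close>
    by (intro sum_mult_powr_le_split) (auto simp: e_def Y_def \<gamma>_def)
  finally show ?thesis
    using \<open>p > 0\<close>
    unfolding lpnorm_def Psi_eq_split_bound[OF \<open>p > 0\<close> \<open>q > 0\<close> e_def \<gamma>_def] J_def[symmetric] Jc_def[symmetric]
    by (intro powr_mono2) (auto intro: sum_nonneg)
qed

definition preact :: "nat \<Rightarrow> (nat \<Rightarrow> real) \<Rightarrow> (nat \<Rightarrow> nat \<Rightarrow> real) \<Rightarrow> nat \<Rightarrow> real" where
  "preact d x u l = (\<Sum>m<d. u l m * x m)"

lemma fnet_eq_sum_preact: "fnet n1 d alpha x r w u = (\<Sum>l<n1. w r l * preact d x u l powr alpha l)"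
  by (simp add: fnet_def preact_def)

lemma fnet_zero_input: "(\<And>m. m < d \<Longrightarrow> x m = 0) \<Longrightarrow> fnet n1 d alpha x r = (\<lambda>_ _. 0)"
  by (simp add: fnet_def fun_eq_iff)

lemma preact_nonneg:
  "(\<And>m. m < d \<Longrightarrow> 0 \<le> u l m) \<Longrightarrow> (\<And>m. m < d \<Longrightarrow> 0 \<le> x m) \<Longrightarrow> 0 \<le> preact d x u l"
  unfolding preact_def by (intro sum_nonneg) simp

lemma preact_pos:
  assumes "\<And>m. m < d \<Longrightarrow> 0 < u l m" "\<And>m. m < d \<Longrightarrow> 0 \<le> x m" "m0 < d" "0 < x m0"
  shows "0 < preact d x u l"
  unfolding preact_def using assms
  by (intro sum_pos2[of "{..<d}" m0]) (auto intro: mult_nonneg_nonneg less_imp_le)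

lemma preact_le_lpnorm:
  "q > 1 \<Longrightarrow> preact d x u l \<le> lpnorm d q (u l) * lpnorm d (conj_exp q) x"
  unfolding preact_def by (intro sum_mult_le_lpnorm conj_exp_gt_1 inverse_add_conj_exp)

lemma sum_mult_preact_powr_le_Psi:
  fixes v delta alpha x :: "nat \<Rightarrow> real" and u :: "nat \<Rightarrow> nat \<Rightarrow> real"
  assumes "pw > 1" "q > 1" "rhou > 0"
    and v: "lpnorm n1 pw v \<le> rhow" and u: "lpnorm_mat n1 d q u \<le> rhou"
    and x: "lpnorm d (conj_exp q) x \<le> rhox"
    and u_nonneg: "\<And>l m. l < n1 \<Longrightarrow> m < d \<Longrightarrow> 0 \<le> u l m"
    and x_nonneg: "\<And>m. m < d \<Longrightarrow> 0 \<le> x m"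
    and "\<And>l. l < n1 \<Longrightarrow> 0 < alpha l" "\<And>l. l < n1 \<Longrightarrow> 0 \<le> delta l"
  shows "(\<Sum>l<n1. v l * (delta l * preact d x u l powr alpha l))
    \<le> rhow * Psi n1 alpha (conj_exp pw) q delta (rhou * rhox)"
proof -
  have "rhox \<ge> 0" "rhow \<ge> 0"
    using x v lpnorm_nonneg order_trans by blast+
  have "conj_exp pw > 0"
    using conj_exp_gt_1[OF \<open>pw > 1\<close>] by simp
  have "(\<Sum>l<n1. v l * (delta l * preact d x u l powr alpha l))
      \<le> lpnorm n1 pw v * lpnorm n1 (conj_exp pw) (\<lambda>l. delta l * preact d x u l powr alpha l)"
    using \<open>pw > 1\<close> by (intro sum_mult_le_lpnorm conj_exp_gt_1 inverse_add_conj_exp)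
  also have "\<dots> \<le> rhow * Psi n1 alpha (conj_exp pw) q delta (rhou * rhox)"
  proof (intro mult_mono lpnorm_le_Psi[where y = "\<lambda>l. lpnorm d q (u l) / rhou"])
    fix l assume "l < n1"
    have "preact d x u l \<le> lpnorm d q (u l) * rhox"
      using preact_le_lpnorm[OF \<open>q > 1\<close>] x lpnorm_nonneg
      by (meson mult_left_mono order_trans)
    then show "0 \<le> preact d x u l \<and> preact d x u l \<le> rhou * rhox * (lpnorm d q (u l) / rhou)"
      using \<open>rhou > 0\<close> \<open>l < n1\<close> u_nonneg x_nonneg by (simp add: preact_nonneg mult.commute)
  next
    show "lpnorm n1 q (\<lambda>l. lpnorm d q (u l) / rhou) \<le> 1"
      using assms(2,3) u by (simp add: lpnorm_divide lpnorm_of_row_norms)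
  qed (use assms \<open>rhox \<ge> 0\<close> \<open>rhow \<ge> 0\<close> \<open>conj_exp pw > 0\<close> in \<open>auto simp: lpnorm_nonneg Psi_nonneg\<close>)
  finally show ?thesis .
qed

section \<open>Partial derivatives of the network and Euler identities\<close>

abbreviation add_entry :: "(nat \<Rightarrow> nat \<Rightarrow> real) \<Rightarrow> nat \<Rightarrow> nat \<Rightarrow> real \<Rightarrow> nat \<Rightarrow> nat \<Rightarrow> real" where
  "add_entry M i j h \<equiv> M(i := (M i)(j := M i j + h))"

lemma preact_add_entry:
  assumes "b < d"
  shows "preact d x (add_entry u a b h) l = preact d x u l + (if l = a then h * x b else 0)"
proof -
  have "preact d x (add_entry u a b h) l
      = (\<Sum>m<d. u l m * x m + (if l = a \<and> m = b then h * x b else 0))"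
    unfolding preact_def by (intro sum.cong) (auto simp: algebra_simps)
  then show ?thesis
    using assms by (simp add: sum.distrib preact_def)
qed

lemma fnet_add_entry_w:
  assumes "t < n1"
  shows "fnet n1 d alpha x r (add_entry w s t h) u
    = fnet n1 d alpha x r w u + h * (if s = r then preact d x u t powr alpha t else 0)"
proof -
  have "fnet n1 d alpha x r (add_entry w s t h) u
      = (\<Sum>l<n1. w r l * preact d x u l powr alpha l
                + (if l = t then h * (if s = r then preact d x u t powr alpha t else 0) else 0))"
    unfolding fnet_eq_sum_preact by (intro sum.cong) (auto simp: algebra_simps)
  then show ?thesis
    using assms by (simp add: sum.distrib fnet_eq_sum_preact)
qed

lemma fnet_add_entry_u:
  assumes "a < n1" "b < d"
  shows "fnet n1 d alpha x r w (add_entry u a b h)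
    = fnet n1 d alpha x r w u - w r a * preact d x u a powr alpha a
      + w r a * (preact d x u a + h * x b) powr alpha a"
proof -
  have "fnet n1 d alpha x r w (add_entry u a b h)
      = (\<Sum>l<n1. w r l * preact d x u l powr alpha l
                + (if l = a then w r a * (preact d x u a + h * x b) powr alpha a
                                 - w r a * preact d x u a powr alpha a else 0))"
    unfolding fnet_eq_sum_preact using assms(2) by (intro sum.cong) (auto simp: preact_add_entry)
  then show ?thesis
    using assms(1) by (simp add: sum.distrib fnet_eq_sum_preact)
qed

lemma pdw_eq_affine:
  assumes "\<And>h. F (add_entry w s t h) u = A + h * k"
  shows "pdw F s t w u = k"
  unfolding pdw_def assms by (rule DERIV_imp_deriv) (auto intro!: derivative_eq_intros)

lemma pdu_eqI:
  assumes "open S" "0 \<in> S" "\<And>h. h \<in> S \<Longrightarrow> F w (add_entry u a b h) = g h"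
    and "(g has_real_derivative D) (at 0)"
  shows "pdu F a b w u = D"
  unfolding pdu_def
  by (rule DERIV_imp_deriv, rule has_field_derivative_transform_within_open[OF assms(4,1,2)])
     (simp add: assms(3))

lemma pdw_const: "pdw (\<lambda>_ _. c) s t = (\<lambda>_ _. 0)"
  by (simp add: pdw_def fun_eq_iff)

lemma pdu_const: "pdu (\<lambda>_ _. c) a b = (\<lambda>_ _. 0)"
  by (simp add: pdu_def fun_eq_iff)

lemma pdw_fnet:
  "t < n1 \<Longrightarrow> pdw (fnet n1 d alpha x r) s t w u = (if s = r then preact d x u t powr alpha t else 0)"
  by (rule pdw_eq_affine) (rule fnet_add_entry_w)

lemma pdu_fnet:
  assumes "a < n1" "b < d" "preact d x u a > 0"
  shows "pdu (fnet n1 d alpha x r) a b w u = w r a * alpha a * preact d x u a powr (alpha a - 1) * x b"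
  using assms
  by (intro pdu_eqI[where S = UNIV]) (auto simp: fnet_add_entry_u intro!: derivative_eq_intros)

lemma pdw_pdw_fnet:
  "b' < n1 \<Longrightarrow> pdw (pdw (fnet n1 d alpha x r) q b') s t w u = 0"
  by (rule pdw_eq_affine[where A = "pdw (fnet n1 d alpha x r) q b' w u"]) (simp add: pdw_fnet)

lemma pdu_pdw_fnet:
  assumes "b' < n1" "b < d" "preact d x u b' > 0"
  shows "pdu (pdw (fnet n1 d alpha x r) q b') a b w u
    = (if q = r \<and> a = b' then alpha b' * preact d x u b' powr (alpha b' - 1) * x b else 0)"
proof (rule pdu_eqI[where S = UNIV])
  fix h
  show "pdw (fnet n1 d alpha x r) q b' w (add_entry u a b h)
      = (if q = r then 1 else 0) * (preact d x u b' + h * (if a = b' then x b else 0)) powr alpha b'"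
    using assms by (simp add: pdw_fnet preact_add_entry)
qed (use assms in \<open>auto intro!: derivative_eq_intros\<close>)

lemma pdw_pdu_fnet:
  assumes "a' < n1" "b'' < d" "preact d x u a' > 0"
  shows "pdw (pdu (fnet n1 d alpha x r) a' b'') s t w u
    = (if s = r \<and> t = a' then alpha a' * preact d x u a' powr (alpha a' - 1) * x b'' else 0)"
  by (rule pdw_eq_affine[where A = "pdu (fnet n1 d alpha x r) a' b'' w u"])
     (use assms in \<open>auto simp: pdu_fnet algebra_simps\<close>)

lemma pdu_pdu_fnet:
  assumes "a' < n1" "b'' < d" "b < d" "preact d x u a' > 0"
  shows "pdu (pdu (fnet n1 d alpha x r) a' b'') a b w u
    = (if a = a' then w r a' * alpha a' * x b'' * ((alpha a' - 1) * preact d x u a' powr (alpha a' - 2) * x b)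
       else 0)"
proof -
  define z where "z = preact d x u a'"
  define k where "k = (if a = a' then x b else 0)"
  define C where "C = w r a' * alpha a' * x b''"
  \<comment> \<open>pdu_fnet holds only while the pre-activation stays positive, i.e. on \<open>S\<close>.\<close>
  define S where "S = {h. 0 < z + h * k}"
  have "open S"
    unfolding S_def by (intro open_Collect_less continuous_intros)
  moreover have "0 \<in> S"
    using assms(4) by (simp add: S_def z_def)
  moreover have "pdu (fnet n1 d alpha x r) a' b'' w (add_entry u a b h) = C * (z + h * k) powr (alpha a' - 1)"
    if "h \<in> S" for h
  proof -
    have "0 < preact d x (add_entry u a b h) a'"
      using that assms(3) by (auto simp: S_def z_def k_def preact_add_entry)
    then show ?thesis
      using assms(1-3) by (auto simp: z_def k_def C_def pdu_fnet preact_add_entry)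
  qed
  moreover have "((\<lambda>h. C * (z + h * k) powr (alpha a' - 1))
      has_real_derivative C * ((alpha a' - 1) * z powr (alpha a' - 2) * k)) (at 0)"
    using assms(4) unfolding z_def by (auto intro!: derivative_eq_intros)
  ultimately have "pdu (pdu (fnet n1 d alpha x r) a' b'') a b w u
      = C * ((alpha a' - 1) * z powr (alpha a' - 2) * k)"
    by (rule pdu_eqI)
  then show ?thesis
    by (simp add: C_def z_def k_def)
qed

lemma powr_diff_1_mult: "(z::real) \<ge> 0 \<Longrightarrow> z powr (e - 1) * z = z powr e"
  using powr_mult_base[of z "e - 1"] by (simp add: mult.commute)

lemma sum_mult_input_eq_preact: "(\<Sum>b<d. u a b * (c * x b)) = c * preact d x u a"
  by (simp add: preact_def sum_distrib_left algebra_simps)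

lemma sum_sum_row_delta:
  fixes u :: "nat \<Rightarrow> nat \<Rightarrow> real"
  assumes "a0 < n1"
  shows "(\<Sum>a<n1. \<Sum>b<d. u a b * (if a = a0 then g b else 0)) = (\<Sum>b<d. u a0 b * g b)"
proof -
  have "(\<Sum>a<n1. \<Sum>b<d. u a b * (if a = a0 then g b else 0))
      = (\<Sum>a<n1. if a = a0 then (\<Sum>b<d. u a0 b * g b) else 0)"
    by (intro sum.cong) auto
  then show ?thesis
    using assms by simp
qed

lemma euler_w_fnet:
  "(\<Sum>t<n1. w s t * pdw (fnet n1 d alpha x r) s t w u)
    = (if s = r then fnet n1 d alpha x r w u else 0)"
proof -
  have "(\<Sum>t<n1. w s t * pdw (fnet n1 d alpha x r) s t w u)
      = (\<Sum>t<n1. w s t * (if s = r then preact d x u t powr alpha t else 0))"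
    by (intro sum.cong refl) (simp add: pdw_fnet)
  then show ?thesis
    by (simp add: fnet_eq_sum_preact)
qed

lemma euler_u_fnet:
  assumes "\<And>l. l < n1 \<Longrightarrow> preact d x u l > 0"
  shows "(\<Sum>a<n1. \<Sum>b<d. u a b * pdu (fnet n1 d alpha x r) a b w u)
    = (\<Sum>l<n1. w r l * (alpha l * preact d x u l powr alpha l))"
proof (intro sum.cong refl)
  fix a assume "a \<in> {..<n1}"
  then have "(\<Sum>b<d. u a b * pdu (fnet n1 d alpha x r) a b w u)
      = (\<Sum>b<d. u a b * ((w r a * alpha a * preact d x u a powr (alpha a - 1)) * x b))"
    using assms by (intro sum.cong refl) (simp add: pdu_fnet)
  also have "\<dots> = w r a * (alpha a * preact d x u a powr alpha a)"
    using assms[of a] \<open>a \<in> {..<n1}\<close> powr_diff_1_mult[of "preact d x u a" "alpha a"]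
    by (simp add: sum_mult_input_eq_preact)
  finally show "(\<Sum>b<d. u a b * pdu (fnet n1 d alpha x r) a b w u)
      = w r a * (alpha a * preact d x u a powr alpha a)" .
qed

lemma euler_u_pdu_pdw_fnet:
  assumes "b' < n1" "preact d x u b' > 0"
  shows "(\<Sum>a<n1. \<Sum>b<d. u a b * pdu (pdw (fnet n1 d alpha x r) q b') a b w u)
    = alpha b' * pdw (fnet n1 d alpha x r) q b' w u"
proof -
  define c where "c = (if q = r then alpha b' * preact d x u b' powr (alpha b' - 1) else 0)"
  have "(\<Sum>a<n1. \<Sum>b<d. u a b * pdu (pdw (fnet n1 d alpha x r) q b') a b w u)
      = (\<Sum>a<n1. \<Sum>b<d. u a b * (if a = b' then c * x b else 0))"
    using assms by (intro sum.cong refl) (simp add: pdu_pdw_fnet c_def)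
  also have "\<dots> = c * preact d x u b'"
    using assms(1) by (simp add: sum_sum_row_delta sum_mult_input_eq_preact)
  also have "\<dots> = alpha b' * pdw (fnet n1 d alpha x r) q b' w u"
    using assms by (simp add: c_def pdw_fnet powr_diff_1_mult mult.assoc)
  finally show ?thesis .
qed

lemma euler_w_pdw_pdu_fnet:
  assumes "a' < n1" "b'' < d" "preact d x u a' > 0"
  shows "(\<Sum>t<n1. w s t * pdw (pdu (fnet n1 d alpha x r) a' b'') s t w u)
    = (if s = r then pdu (fnet n1 d alpha x r) a' b'' w u else 0)"
  using assms by (simp add: pdw_pdu_fnet pdu_fnet if_distrib[of "(*) _"] mult.assoc cong: if_cong)

lemma euler_u_pdu_pdu_fnet:
  assumes "a' < n1" "b'' < d" "preact d x u a' > 0"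
  shows "(\<Sum>a<n1. \<Sum>b<d. u a b * pdu (pdu (fnet n1 d alpha x r) a' b'') a b w u)
    = (alpha a' - 1) * pdu (fnet n1 d alpha x r) a' b'' w u"
proof -
  define c where "c = w r a' * alpha a' * x b'' * ((alpha a' - 1) * preact d x u a' powr (alpha a' - 2))"
  have "(\<Sum>a<n1. \<Sum>b<d. u a b * pdu (pdu (fnet n1 d alpha x r) a' b'') a b w u)
      = (\<Sum>a<n1. \<Sum>b<d. u a b * (if a = a' then c * x b else 0))"
    using assms by (intro sum.cong refl) (simp add: pdu_pdu_fnet c_def mult.assoc)
  also have "\<dots> = c * preact d x u a'"
    using assms(1) by (simp add: sum_sum_row_delta sum_mult_input_eq_preact)
  also have "\<dots> = (alpha a' - 1) * pdu (fnet n1 d alpha x r) a' b'' w u"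
    using assms powr_diff_1_mult[of "preact d x u a'" "alpha a' - 1"]
    by (simp add: c_def pdu_fnet algebra_simps)
  finally show ?thesis .
qed

lemma second_order_bounds_fnet:
  fixes n1 d r :: nat and alpha x :: "nat \<Rightarrow> real" and A :: real
  defines "F \<equiv> fnet n1 d alpha x r"
  assumes z_pos: "\<And>l. l < n1 \<Longrightarrow> 0 < preact d x u l"
    and alpha: "\<And>l. l < n1 \<Longrightarrow> 0 \<le> alpha l \<and> alpha l \<le> A"
    and "\<And>m. m < d \<Longrightarrow> 0 \<le> x m" "0 \<le> w r a'"
    and "b' < n1" "a' < n1" "b'' < d"
  shows "(\<Sum>t<n1. w s t * pdw (pdw F q b') s t w u) = 0
     \<and> (\<Sum>a<n1. \<Sum>b<d. u a b * pdu (pdw F q b') a b w u) \<le> A * pdw F q b' w u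
     \<and> (\<Sum>t<n1. w s t * pdw (pdu F a' b'') s t w u) \<le> pdu F a' b'' w u
     \<and> (\<Sum>a<n1. \<Sum>b<d. u a b * pdu (pdu F a' b'') a b w u) \<le> (A - 1) * pdu F a' b'' w u"
proof -
  have "0 \<le> pdw F q b' w u"
    using \<open>b' < n1\<close> by (simp add: F_def pdw_fnet)
  moreover have "0 \<le> pdu F a' b'' w u"
    using assms(4-8) z_pos alpha by (auto simp: F_def pdu_fnet intro!: mult_nonneg_nonneg)
  ultimately show ?thesis
    using assms(6-8) z_pos alpha[of b'] alpha[of a']
    by (simp add: F_def pdw_pdw_fnet euler_u_pdu_pdw_fnet euler_w_pdw_pdu_fnet euler_u_pdu_pdu_fnet
        mult_right_mono)
qed

theorem mainTheorem11:
  fixes K n1 d n :: nat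
    and X :: "nat \<Rightarrow> nat \<Rightarrow> real"
    and alpha :: "nat \<Rightarrow> real"
    and pw pu rhow rhou :: real
    and w u :: "nat \<Rightarrow> nat \<Rightarrow> real"
    and i r s q b' a' b'' :: nat
  assumes "pw > 1" and "pu > 1" and "rhow > 0" and "rhou > 0"
    and "\<forall>j<n. \<forall>m<d. X j m \<ge> 0"
    and "\<forall>l<n1. alpha l \<ge> 1"
    and "i < n"
    and "(w, u) \<in> Bpp K n1 d pw pu rhow rhou"
    and "r < K" and "s < K" and "q < K"
    and "b' < n1" and "a' < n1" and "b'' < d"
  defines "rhox \<equiv> Max ((\<lambda>j. lpnorm d (conj_exp pu) (X j)) ` {..<n})"
    and "F \<equiv> fnet n1 d alpha (X i) r"
    and "alpha_inf \<equiv> Max ((\<lambda>l. \<bar>alpha l\<bar>) ` {..<n1})"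
  shows "(\<Sum>t<n1. w s t * pdw F s t w u)
           \<le> rhow * Psi n1 alpha (conj_exp pw) pu (\<lambda>_. 1) (rhou * rhox)
     \<and> (\<Sum>a<n1. \<Sum>b<d. u a b * pdu F a b w u)
           \<le> rhow * Psi n1 alpha (conj_exp pw) pu alpha (rhou * rhox)
     \<and> (\<Sum>t<n1. w s t * pdw (pdw F q b') s t w u) = 0
     \<and> (\<Sum>a<n1. \<Sum>b<d. u a b * pdu (pdw F q b') a b w u) \<le> alpha_inf * pdw F q b' w u
     \<and> (\<Sum>t<n1. w s t * pdw (pdu F a' b'') s t w u) \<le> pdu F a' b'' w u
     \<and> (\<Sum>a<n1. \<Sum>b<d. u a b * pdu (pdu F a' b'') a b w u)
           \<le> (alpha_inf - 1) * pdu F a' b'' w u"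
proof -
  define x where "x = X i"
  have F: "F = fnet n1 d alpha x r"
    by (simp add: F_def x_def)
  have x_nonneg: "\<And>m. m < d \<Longrightarrow> 0 \<le> x m" and alpha_pos: "\<And>l. l < n1 \<Longrightarrow> 0 < alpha l"
    using assms(5-7) by (auto simp: x_def intro: less_le_trans[OF zero_less_one])
  have w_pos: "\<And>l. l < n1 \<Longrightarrow> 0 < w r l" and u_pos: "\<And>l m. l < n1 \<Longrightarrow> m < d \<Longrightarrow> 0 < u l m"
    using assms(8,9) by (auto simp: Bpp_def)
  have "lpnorm d (conj_exp pu) x \<le> rhox"
    unfolding rhox_def x_def using assms(7) by (intro Max_ge) auto
  then have bound: "(\<Sum>l<n1. w r l * (delta l * preact d x u l powr alpha l))
      \<le> rhow * Psi n1 alpha (conj_exp pw) pu delta (rhou * rhox)"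
    if "\<And>l. l < n1 \<Longrightarrow> 0 \<le> delta l" for delta
    using assms(1,2,4,8,9) x_nonneg alpha_pos that
    by (intro sum_mult_preact_powr_le_Psi) (auto simp: Bpp_def less_imp_le[OF u_pos])
  have alpha_bounds: "0 \<le> alpha l \<and> alpha l \<le> alpha_inf" if "l < n1" for l
    using alpha_pos[OF that] that unfolding alpha_inf_def by (auto intro: le_Max_abs_image)
  have Psi_bound_nonneg: "0 \<le> rhow * Psi n1 alpha (conj_exp pw) pu delta (rhou * rhox)" for delta
    using assms(3) Psi_nonneg by simp
  have first: "(\<Sum>t<n1. w s t * pdw F s t w u)
      \<le> rhow * Psi n1 alpha (conj_exp pw) pu (\<lambda>_. 1) (rhou * rhox)"
    using bound[of "\<lambda>_. 1"] Psi_bound_nonneg by (simp add: F euler_w_fnet fnet_eq_sum_preact)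
  show ?thesis
  proof (cases "\<forall>m<d. x m = 0")
    case True
    then show ?thesis
      using first Psi_bound_nonneg by (simp add: F fnet_zero_input pdw_const pdu_const)
  next
    case False
    then obtain m0 where "m0 < d" "0 < x m0"
      using x_nonneg by (metis order_le_less)
    then have z_pos: "\<And>l. l < n1 \<Longrightarrow> 0 < preact d x u l"
      using u_pos x_nonneg by (blast intro: preact_pos)
    show ?thesis
      using first bound[of alpha] z_pos alpha_pos
        second_order_bounds_fnet[where w = w and r = r and s = s and q = q,
          OF z_pos alpha_bounds x_nonneg less_imp_le[OF w_pos[OF assms(13)]] assms(12-14)]
      by (simp add: F euler_u_fnet less_imp_le)
  qed
qed

end
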